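(* Let $u\in\mathbb{R}^d$. There exists $C>0$ such that for every disorder configuration $\xi\in\mathbb{R}^{\mathbb{Z}^d}$, all $a=(a_i),l=(l_i)\in\mathbb{Z}^d$ with $a_i<l_i$ for $i=1,\dots,d$, and every $l_1'\in\mathbb{Z}$ with $a_1<l_1'<l_1$, $$-\log Z^{\psi_u}_{\bar\Lambda^{a,l}}[\xi]\le-\log Z^{\psi_u}_{\bar\Lambda^{a,l}_{[a_1,l_1'-1]}}[\xi]-\log Z^{\psi_u}_{\bar\Lambda^{a,l}_{[l_1'+1,l_1]}}[\xi]-\prod_{i=2}^d(l_i-a_i+1)\Big(\log C-\sum_{i=2}^dV(u_i)\Big)-\sum_{x\in\bar\Lambda^{a,l}_{l_1'}}u\cdot(l_1',x_2,\dots,x_d)\,\xi(x).$$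
   Context: $V\in C^2(\mathbb{R})$ is even, with $V(s)\ge As^2-B$ for all $s$ (some $A>0$, $B\in\mathbb{R}$) and $V''(s)\le C_2$ for all $s$ (some $C_2>0$). For finite $\Lambda\subset\mathbb{Z}^d$, $\partial\Lambda=\{x\notin\Lambda:\|x-y\|_1=1\text{ for some }y\in\Lambda\}$. For $\psi\in\mathbb{R}^{\mathbb{Z}^d}$ and $\xi\in\mathbb{R}^{\mathbb{Z}^d}$, $$H^\psi_\Lambda[\xi](\phi)=\tfrac12\sum_{x,y\in\Lambda,|x-y|=1}V(\phi(x)-\phi(y))+\sum_{x\in\Lambda,y\in\partial\Lambda,|x-y|=1}V(\phi(x)-\psi(y))-\sum_{x\in\Lambda}\xi(x)\phi(x)$$ (sums over ordered nearest-neighbour pairs), and $Z^\psi_\Lambda[\xi]=\int_{\mathbb{R}^\Lambda}\exp(-H^\psi_\Lambda[\xi](\phi))\prod_{x\in\Lambda}\mathrm{d}\phi(x)$. Here $\psi_u(x)=x\cdot u$. For $a,l\in\mathbb{Z}^d$, $\bar\Lambda^{a,l}=\{z\in\mathbb{Z}^d:a_i\le z_i\le l_i,\ i=1,\dots,d\}$; for integers $s\le t$, $\bar\Lambda^{a,l}_{[s,t]}=\{z:s\le z_1\le t,\ a_i\le z_i\le l_i\ (i\ge2)\}$ and $\bar\Lambda^{a,l}_{s}=\{z:z_1=s,\ a_i\le z_i\le l_i\ (i\ge2)\}$. *)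

theory Defs
  imports "HOL-Analysis.Analysis"
begin

text \<open>Sites of the lattice Z^d are represented as functions nat => int whose
coordinates 1..d are the meaningful ones and which vanish outside {1..d}.\<close>

type_synonym site = "nat \<Rightarrow> int"

definition lattice :: "nat \<Rightarrow> site set" where
  "lattice d = {z. \<forall>i. i \<notin> {1..d} \<longrightarrow> z i = 0}"

definition adj :: "nat \<Rightarrow> site \<Rightarrow> site \<Rightarrow> bool" where
  "adj d x y \<longleftrightarrow> (\<Sum>i=1..d. \<bar>x i - y i\<bar>) = 1"

definition bdry :: "nat \<Rightarrow> site set \<Rightarrow> site set" where
  "bdry d \<Lambda> = {x \<in> lattice d. x \<notin> \<Lambda> \<and> (\<exists>y\<in>\<Lambda>. adj d x y)}"

definition Ham :: "nat \<Rightarrow> (real \<Rightarrow> real) \<Rightarrow> site set \<Rightarrow> (site \<Rightarrow> real) \<Rightarrow> (site \<Rightarrow> real)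
    \<Rightarrow> (site \<Rightarrow> real) \<Rightarrow> real" where
  "Ham d V \<Lambda> \<psi> \<xi> \<phi> =
     1/2 * (\<Sum>x\<in>\<Lambda>. \<Sum>y\<in>\<Lambda>. if adj d x y then V (\<phi> x - \<phi> y) else 0)
   + (\<Sum>x\<in>\<Lambda>. \<Sum>y\<in>bdry d \<Lambda>. if adj d x y then V (\<phi> x - \<psi> y) else 0)
   - (\<Sum>x\<in>\<Lambda>. \<xi> x * \<phi> x)"

definition Zpart :: "nat \<Rightarrow> (real \<Rightarrow> real) \<Rightarrow> site set \<Rightarrow> (site \<Rightarrow> real) \<Rightarrow> (site \<Rightarrow> real) \<Rightarrow> real" where
  "Zpart d V \<Lambda> \<psi> \<xi> = integral\<^sup>L (PiM \<Lambda> (\<lambda>_. lborel)) (\<lambda>\<phi>. exp (- Ham d V \<Lambda> \<psi> \<xi> \<phi>))"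

definition psi :: "nat \<Rightarrow> (nat \<Rightarrow> real) \<Rightarrow> site \<Rightarrow> real" where
  "psi d u x = (\<Sum>i=1..d. real_of_int (x i) * u i)"

definition box :: "nat \<Rightarrow> site \<Rightarrow> site \<Rightarrow> site set" where
  "box d a l = {z \<in> lattice d. \<forall>i\<in>{1..d}. a i \<le> z i \<and> z i \<le> l i}"

definition box_strip :: "nat \<Rightarrow> site \<Rightarrow> site \<Rightarrow> int \<Rightarrow> int \<Rightarrow> site set" where
  "box_strip d a l s t = {z \<in> lattice d. s \<le> z 1 \<and> z 1 \<le> t \<and> (\<forall>i\<in>{2..d}. a i \<le> z i \<and> z i \<le> l i)}"

definition box_slice :: "nat \<Rightarrow> site \<Rightarrow> site \<Rightarrow> int \<Rightarrow> site set" where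
  "box_slice d a l s = {z \<in> lattice d. z 1 = s \<and> (\<forall>i\<in>{2..d}. a i \<le> z i \<and> z i \<le> l i)}"

end

theory Submission
  imports Defs "HOL-Probability.Distributions"
begin

(*
  Restrict the integral defining the partition function of the box to fields that stay within
  distance 1 of the tilted boundary condition psi_u on the slice S = {x. x_1 = l1'}, and pair each
  such field phi with its reflection 2 psi_u - phi on S.  The reflection preserves Lebesgue
  measure and the restriction, so by AM-GM the restricted integral is at least that of
  exp (-(H phi + H phi')/2).  The semiconvexity V (c + s) + V (c - s) <= 2 V c + 2 C2 s^2, a
  consequence of V'' <= C2, bounds H phi + H phi' by twice the energies of the two halves
  with the slice frozen at psi_u, up to a cost of order |V (u_i)| + C2 per bond at the slice.
  The two halves are not adjacent, so what remains factorises into their partition functions.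
*)

section \<open>Lattice geometry\<close>

definition neighbours :: "nat \<Rightarrow> site \<Rightarrow> site set" where
  "neighbours d x = {y \<in> lattice d. adj d x y}"

lemma adj_commute: "adj d x y \<longleftrightarrow> adj d y x"
  unfolding adj_def by (simp add: abs_minus_commute)

lemma adj_coordinate_le:
  assumes "adj d x y" and "i \<in> {1..d}"
  shows "\<bar>x i - y i\<bar> \<le> 1"
proof -
  have "\<bar>x i - y i\<bar> \<le> (\<Sum>j=1..d. \<bar>x j - y j\<bar>)"
    by (rule member_le_sum) (use assms(2) in auto)
  with assms(1) show ?thesis by (simp add: adj_def)
qed

lemma adj_imp_unit_step:
  assumes x: "x \<in> lattice d" and y: "y \<in> lattice d" and xy: "adj d x y"
  shows "\<exists>i\<in>{1..d}. \<exists>s\<in>{-1,1}. y = x(i := x i + s)"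
proof -
  have total: "(\<Sum>j=1..d. \<bar>x j - y j\<bar>) = 1" using xy by (simp add: adj_def)
  then obtain i where i: "i \<in> {1..d}" "x i \<noteq> y i"
    by (metis (no_types, lifting) abs_eq_0 eq_iff_diff_eq_0 sum.neutral zero_neq_one)
  have "(\<Sum>j=1..d. \<bar>x j - y j\<bar>) = \<bar>x i - y i\<bar> + (\<Sum>j\<in>{1..d}-{i}. \<bar>x j - y j\<bar>)"
    using i(1) by (simp add: sum.remove)
  moreover have "\<bar>x i - y i\<bar> = 1" using adj_coordinate_le[OF xy i(1)] i(2) by simp
  ultimately have "(\<Sum>j\<in>{1..d}-{i}. \<bar>x j - y j\<bar>) = 0" using total by simp
  then have inside: "\<forall>j\<in>{1..d}-{i}. x j = y j" by (subst (asm) sum_nonneg_eq_0_iff) auto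
  have outside: "x j = y j" if "j \<notin> {1..d}" for j
    using x y that by (simp add: lattice_def)
  have "y j = (x(i := x i + (y i - x i))) j" for j
  proof (cases "j = i")
    case False
    then show ?thesis using inside outside by (cases "j \<in> {1..d}") auto
  qed simp
  then have "y = x(i := x i + (y i - x i))" ..
  moreover have "y i - x i \<in> {-1,1}" using \<open>\<bar>x i - y i\<bar> = 1\<close> by (auto simp: abs_if split: if_splits)
  ultimately show ?thesis using i(1) by blast
qed

lemma neighbours_subset_unit_steps:
  "x \<in> lattice d \<Longrightarrow> neighbours d x \<subseteq> (\<lambda>(i,s). x(i := x i + s)) ` ({1..d} \<times> {-1,1})"
proof
  fix y assume "x \<in> lattice d" "y \<in> neighbours d x"
  then obtain i s where "i \<in> {1..d}" "s \<in> {-1,1}" "y = x(i := x i + s)"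
    using adj_imp_unit_step unfolding neighbours_def by blast
  then show "y \<in> (\<lambda>(i,s). x(i := x i + s)) ` ({1..d} \<times> {-1,1})" by force
qed

lemma finite_neighbours: "x \<in> lattice d \<Longrightarrow> finite (neighbours d x)"
  by (rule finite_subset[OF neighbours_subset_unit_steps]) auto

lemma card_neighbours_le: "x \<in> lattice d \<Longrightarrow> card (neighbours d x) \<le> 2 * d"
proof -
  assume x: "x \<in> lattice d"
  have "card (neighbours d x) \<le> card ((\<lambda>(i,s). x(i := x i + s)) ` ({1..d} \<times> {-1,1::int}))"
    by (rule card_mono[OF _ neighbours_subset_unit_steps[OF x]]) auto
  also have "\<dots> \<le> card ({1..d} \<times> {-1,1::int})" by (rule card_image_le) auto
  also have "\<dots> = 2 * d" by (simp add: card_cartesian_product)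
  finally show ?thesis .
qed

lemma predecessor_in_neighbours:
  assumes "d \<ge> 1" and "x \<in> lattice d"
  shows "x(1 := x 1 - 1) \<in> neighbours d x"
proof -
  have "(\<Sum>i=1..d. \<bar>x i - (x(1 := x 1 - 1)) i\<bar>) = (\<Sum>i=1..d. if i = 1 then 1 else 0)"
    by (rule sum.cong) auto
  also have "\<dots> = 1" using assms(1) by simp
  finally show ?thesis using assms by (auto simp: neighbours_def adj_def lattice_def)
qed

lemma finite_bdry: "finite \<Lambda> \<Longrightarrow> \<Lambda> \<subseteq> lattice d \<Longrightarrow> finite (bdry d \<Lambda>)"
proof -
  assume "finite \<Lambda>" "\<Lambda> \<subseteq> lattice d"
  then have "finite (\<Union>y\<in>\<Lambda>. neighbours d y)" using finite_neighbours by blast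
  moreover have "bdry d \<Lambda> \<subseteq> (\<Union>y\<in>\<Lambda>. neighbours d y)"
    by (auto simp: bdry_def neighbours_def adj_commute)
  ultimately show ?thesis by (rule finite_subset[rotated])
qed

lemma box_subset_PiE_image:
  "box d a l \<subseteq> (\<lambda>g i. if i \<in> {1..d} then g i else 0) ` PiE {1..d} (\<lambda>i. {a i..l i})"
proof
  fix z assume z: "z \<in> box d a l"
  have "z = (\<lambda>i. if i \<in> {1..d} then restrict z {1..d} i else 0)"
    using z by (auto simp: box_def lattice_def)
  moreover have "restrict z {1..d} \<in> PiE {1..d} (\<lambda>i. {a i..l i})" using z by (auto simp: box_def)
  ultimately show "z \<in> (\<lambda>g i. if i \<in> {1..d} then g i else 0) ` PiE {1..d} (\<lambda>i. {a i..l i})"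
    by blast
qed

lemma finite_box: "finite (box d a l)"
  by (rule finite_subset[OF box_subset_PiE_image]) (auto intro: finite_PiE)

lemma card_box_le: "card (box d a l) \<le> (\<Prod>i=1..d. nat (l i - a i + 1))"
proof -
  have "card (box d a l) \<le> card (PiE {1..d} (\<lambda>i. {a i..l i}))"
    by (rule card_mono[OF _ box_subset_PiE_image, THEN order_trans])
       (auto intro: finite_PiE card_image_le)
  then show ?thesis by (simp add: card_PiE)
qed

lemma box_strip_eq_box: "d \<ge> 1 \<Longrightarrow> box_strip d a l s t = box d (a(1 := s)) (l(1 := t))"
proof -
  assume "d \<ge> 1"
  then have "{1..d} = insert (1::nat) {2..d}" by auto
  then show ?thesis unfolding box_strip_def box_def by auto
qed

lemma box_slice_eq_box_strip: "box_slice d a l s = box_strip d a l s s"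
  unfolding box_strip_def box_slice_def by auto

lemma box_eq_strips_union_slice:
  assumes "d \<ge> 1" and "a 1 \<le> l1'" and "l1' \<le> l 1"
  shows "box d a l = box_strip d a l (a 1) (l1' - 1) \<union> box_slice d a l l1' \<union> box_strip d a l (l1' + 1) (l 1)"
proof -
  have "{1..d} = insert (1::nat) {2..d}" using assms(1) by auto
  then show ?thesis using assms unfolding box_def box_strip_def box_slice_def by auto
qed

lemma card_box_slice_le:
  assumes d: "d \<ge> 1" and "\<forall>i\<in>{2..d}. a i \<le> l i"
  shows "real (card (box_slice d a l s)) \<le> (\<Prod>i=2..d. real_of_int (l i - a i + 1))"
proof -
  have "{1..d} = insert (1::nat) {2..d}" using d by auto
  then have "card (box_slice d a l s) \<le> (\<Prod>i=2..d. nat (l i - a i + 1))"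
    using card_box_le[of d "a(1 := s)" "l(1 := s)"]
    unfolding box_slice_eq_box_strip box_strip_eq_box[OF d] by simp
  then have "real (card (box_slice d a l s)) \<le> (\<Prod>i=2..d. real (nat (l i - a i + 1)))"
    by (metis of_nat_le_iff of_nat_prod)
  also have "\<dots> = (\<Prod>i=2..d. real_of_int (l i - a i + 1))"
    using assms(2) by (intro prod.cong) auto
  finally show ?thesis .
qed

lemma psi_on_box_slice:
  assumes "d \<ge> 1" and "x \<in> box_slice d a l s"
  shows "psi d u x = u 1 * real_of_int s + (\<Sum>i=2..d. u i * real_of_int (x i))"
proof -
  have "{1..d} = insert (1::nat) {2..d}" using assms(1) by auto
  then show ?thesis using assms(2) unfolding psi_def by (simp add: box_slice_def mult.commute)
qed

lemma psi_unit_step: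
  assumes "i \<in> {1..d}"
  shows "psi d u x - psi d u (x(i := x i + s)) = - real_of_int s * u i"
proof -
  have remove_i: "(\<Sum>j=1..d. f j) = f i + (\<Sum>j\<in>{1..d}-{i}. f j)" for f :: "nat \<Rightarrow> real"
    by (rule sum.remove) (use assms in auto)
  have "(\<Sum>j\<in>{1..d}-{i}. real_of_int ((x(i := x i + s)) j) * u j)
      = (\<Sum>j\<in>{1..d}-{i}. real_of_int (x j) * u j)"
    by (rule sum.cong) auto
  then show ?thesis
    unfolding psi_def remove_i[of "\<lambda>j. real_of_int ((x(i := x i + s)) j) * u j"]
      remove_i[of "\<lambda>j. real_of_int (x j) * u j"]
    by (simp add: algebra_simps)
qed

lemma abs_V_psi_neighbour_le:
  fixes V :: "real \<Rightarrow> real"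
  assumes even: "\<And>s. V (- s) = V s" and x: "x \<in> lattice d" and y: "y \<in> neighbours d x"
  shows "\<bar>V (psi d u x - psi d u y)\<bar> \<le> (\<Sum>i=1..d. \<bar>V (u i)\<bar>)"
proof -
  obtain i s where i: "i \<in> {1..d}" and s: "s \<in> {-1,1}" and y_eq: "y = x(i := x i + s)"
    using adj_imp_unit_step[OF x] y unfolding neighbours_def by blast
  have "V (psi d u x - psi d u y) = V (u i)"
    using psi_unit_step[OF i, of u x s] s even[of "u i"] unfolding y_eq by auto
  moreover have "\<bar>V (u i)\<bar> \<le> (\<Sum>i=1..d. \<bar>V (u i)\<bar>)"
    by (rule member_le_sum) (use i in auto)
  ultimately show ?thesis by simp
qed

section \<open>Semiconvexity of the potential\<close>

lemma deriv_diff_le: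
  fixes V :: "real \<Rightarrow> real"
  assumes "\<And>s. deriv V differentiable (at s)" and "\<And>s. deriv (deriv V) s \<le> C2" and "q \<le> p"
  shows "deriv V p - deriv V q \<le> C2 * (p - q)"
proof (cases "q = p")
  case False
  with assms(3) have "q < p" by simp
  moreover have "\<And>x. DERIV (deriv V) x :> deriv (deriv V) x"
    using assms(1) DERIV_deriv_iff_real_differentiable by blast
  ultimately obtain z where "deriv V p - deriv V q = (p - q) * deriv (deriv V) z"
    using MVT2 by blast
  moreover have "(p - q) * deriv (deriv V) z \<le> (p - q) * C2"
    using assms(2) \<open>q < p\<close> by (intro mult_left_mono) auto
  ultimately show ?thesis by (simp add: mult.commute)
qed simp

lemma semiconvex_of_deriv2_le:
  fixes V :: "real \<Rightarrow> real"
  assumes V': "\<And>s. V differentiable (at s)" and V'': "\<And>s. deriv V differentiable (at s)"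
    and bound: "\<And>s. deriv (deriv V) s \<le> C2" and C2: "C2 \<ge> 0"
  shows "V (c + s) + V (c - s) \<le> 2 * V c + 2 * C2 * s\<^sup>2"
proof -
  have D: "\<And>x. DERIV V x :> deriv V x"
    using V' DERIV_deriv_iff_real_differentiable by blast
  have pos: "V (c + s) + V (c - s) \<le> 2 * V c + 2 * C2 * s\<^sup>2" if s: "s > 0" for s
  proof -
    obtain z1 where z1: "c < z1" "z1 < c + s" "V (c + s) - V c = s * deriv V z1"
      using MVT2[of c "c + s" V "deriv V"] s D by auto
    obtain z2 where z2: "c - s < z2" "z2 < c" "V c - V (c - s) = s * deriv V z2"
      using MVT2[of "c - s" c V "deriv V"] s D by auto
    have "deriv V z1 - deriv V z2 \<le> C2 * (z1 - z2)"
      by (rule deriv_diff_le[OF V'' bound]) (use z1 z2 in auto)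
    also have "\<dots> \<le> C2 * (2 * s)"
      using z1 z2 C2 by (intro mult_left_mono) auto
    finally have "s * (deriv V z1 - deriv V z2) \<le> s * (C2 * (2 * s))"
      using s by (intro mult_left_mono) auto
    then show ?thesis using z1(3) z2(3) by (simp add: power2_eq_square algebra_simps)
  qed
  consider "s > 0" | "s = 0" | "s < 0" by linarith
  then show ?thesis
  proof cases
    case 3
    then show ?thesis using pos[of "- s"] by (simp add: add.commute)
  qed (use pos in auto)
qed

section \<open>Bond decomposition of the Hamiltonian\<close>

(* The energy of the ordered bond (x, y) charged to x: bonds inside \<Lambda> are seen from both ends
   and hence halved, bonds to the boundary are charged entirely to their inner end. *)
definition bond_energy ::
    "(real \<Rightarrow> real) \<Rightarrow> site set \<Rightarrow> (site \<Rightarrow> real) \<Rightarrow> (site \<Rightarrow> real) \<Rightarrow> site \<Rightarrow> site \<Rightarrow> real" where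
  "bond_energy V \<Lambda> \<psi> \<phi> x y = (if y \<in> \<Lambda> then V (\<phi> x - \<phi> y) / 2 else V (\<phi> x - \<psi> y))"

lemma sum_neighbours_if_eq:
  assumes x: "x \<in> lattice d" and T: "T \<subseteq> lattice d" "finite T"
  shows "(\<Sum>y\<in>neighbours d x. if y \<in> T then f y else 0) = (\<Sum>y\<in>T. if adj d x y then f y else 0)"
proof -
  have "(\<Sum>y\<in>neighbours d x. if y \<in> T then f y else 0) = sum f (neighbours d x \<inter> T)"
    by (rule sum.inter_restrict[symmetric]) (rule finite_neighbours[OF x])
  also have "neighbours d x \<inter> T = T \<inter> {y. adj d x y}" using T by (auto simp: neighbours_def)
  finally show ?thesis by (simp add: sum.inter_restrict[OF T(2)])
qed

lemma sum_neighbours_swap: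
  assumes P: "P \<subseteq> lattice d" "finite P" and Q: "Q \<subseteq> lattice d" "finite Q"
  shows "(\<Sum>x\<in>P. \<Sum>y\<in>neighbours d x. if y \<in> Q then f x y else 0)
       = (\<Sum>y\<in>Q. \<Sum>x\<in>neighbours d y. if x \<in> P then f x y else 0)"
proof -
  have "(\<Sum>x\<in>P. \<Sum>y\<in>neighbours d x. if y \<in> Q then f x y else 0)
      = (\<Sum>x\<in>P. \<Sum>y\<in>Q. if adj d x y then f x y else 0)"
    using P Q by (intro sum.cong refl sum_neighbours_if_eq) auto
  also have "\<dots> = (\<Sum>y\<in>Q. \<Sum>x\<in>P. if adj d y x then f x y else 0)"
    by (subst sum.swap) (simp add: adj_commute)
  also have "\<dots> = (\<Sum>y\<in>Q. \<Sum>x\<in>neighbours d y. if x \<in> P then f x y else 0)"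
    using P Q by (intro sum.cong refl sum_neighbours_if_eq[symmetric]) auto
  finally show ?thesis .
qed

lemma Ham_eq_sum_bond_energy:
  assumes fin: "finite \<Lambda>" and sub: "\<Lambda> \<subseteq> lattice d"
  shows "Ham d V \<Lambda> \<psi> \<xi> \<phi>
       = (\<Sum>x\<in>\<Lambda>. \<Sum>y\<in>neighbours d x. bond_energy V \<Lambda> \<psi> \<phi> x y) - (\<Sum>x\<in>\<Lambda>. \<xi> x * \<phi> x)"
proof -
  have "(\<Sum>y\<in>neighbours d x. bond_energy V \<Lambda> \<psi> \<phi> x y)
      = (\<Sum>y\<in>\<Lambda>. if adj d x y then V (\<phi> x - \<phi> y) else 0) / 2
        + (\<Sum>y\<in>bdry d \<Lambda>. if adj d x y then V (\<phi> x - \<psi> y) else 0)"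
    if x: "x \<in> \<Lambda>" for x
  proof -
    have xl: "x \<in> lattice d" using x sub by auto
    have "y \<in> bdry d \<Lambda> \<longleftrightarrow> y \<notin> \<Lambda>" if "y \<in> neighbours d x" for y
      using that x by (auto simp: bdry_def neighbours_def adj_commute)
    then have "(\<Sum>y\<in>neighbours d x. bond_energy V \<Lambda> \<psi> \<phi> x y)
        = (\<Sum>y\<in>neighbours d x. if y \<in> \<Lambda> then V (\<phi> x - \<phi> y) / 2 else 0)
          + (\<Sum>y\<in>neighbours d x. if y \<in> bdry d \<Lambda> then V (\<phi> x - \<psi> y) else 0)"
      unfolding sum.distrib[symmetric] by (intro sum.cong) (auto simp: bond_energy_def)
    also have "\<dots> = (\<Sum>y\<in>\<Lambda>. if adj d x y then V (\<phi> x - \<phi> y) / 2 else 0)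
          + (\<Sum>y\<in>bdry d \<Lambda>. if adj d x y then V (\<phi> x - \<psi> y) else 0)"
    proof -
      have "bdry d \<Lambda> \<subseteq> lattice d" by (auto simp: bdry_def)
      then show ?thesis
        by (simp add: sum_neighbours_if_eq[OF xl] sub fin finite_bdry[OF fin sub])
    qed
    finally show ?thesis by (auto simp: sum_divide_distrib intro!: sum.cong)
  qed
  then show ?thesis
    unfolding Ham_def by (simp add: sum.distrib sum_divide_distrib[symmetric])
qed

lemma Ham_cong:
  assumes "\<And>x. x \<in> \<Lambda> \<Longrightarrow> \<phi> x = \<phi>' x"
  shows "Ham d V \<Lambda> \<psi> \<xi> \<phi> = Ham d V \<Lambda> \<psi> \<xi> \<phi>'"
  unfolding Ham_def using assms by (intro arg_cong2[where f = "(-)"] arg_cong2[where f = "(+)"]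
    arg_cong2[where f = "(*)"] refl sum.cong) simp_all

abbreviation field_measure :: "site set \<Rightarrow> (site \<Rightarrow> real) measure" where
  "field_measure \<Lambda> \<equiv> PiM \<Lambda> (\<lambda>_. lborel)"

lemma borel_measurable_Ham:
  assumes "finite \<Lambda>" and "\<Lambda> \<subseteq> I" and V: "continuous_on UNIV V"
  shows "(\<lambda>\<phi>. Ham d V \<Lambda> \<psi> \<xi> \<phi>) \<in> borel_measurable (field_measure I)"
proof -
  have [measurable]: "V \<in> borel_measurable borel" using V by (rule borel_measurable_continuous_onI)
  have [measurable]: "(\<lambda>\<phi>. \<phi> x) \<in> borel_measurable (field_measure I)" if "x \<in> \<Lambda>" for x
    using that assms(2) by (auto intro!: measurable_component_singleton)
  show ?thesis
    unfolding Ham_def by measurable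
qed

section \<open>The reflection estimate\<close>

lemma exp_add_exp_ge: "2 * exp ((a + b) / 2) \<le> exp a + exp (b::real)"
proof -
  have "exp a = exp (a / 2) ^ 2" "exp b = exp (b / 2) ^ 2" "exp ((a + b) / 2) = exp (a / 2) * exp (b / 2)"
    by (simp_all add: exp_add[symmetric] power2_eq_square add_divide_distrib)
  moreover have "0 \<le> (exp (a / 2) - exp (b / 2))\<^sup>2" by simp
  ultimately show ?thesis by (simp add: power2_eq_square algebra_simps)
qed

definition slice_interaction ::
    "nat \<Rightarrow> (real \<Rightarrow> real) \<Rightarrow> real \<Rightarrow> site set \<Rightarrow> (site \<Rightarrow> real) \<Rightarrow> real" where
  "slice_interaction d V C2 S \<psi> = (\<Sum>x\<in>S. \<Sum>y\<in>neighbours d x. \<bar>V (\<psi> x - \<psi> y)\<bar> + 2 * C2)"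

definition reflect_on :: "site set \<Rightarrow> (site \<Rightarrow> real) \<Rightarrow> (site \<Rightarrow> real) \<Rightarrow> site \<Rightarrow> real" where
  "reflect_on S \<psi> \<phi> x = (if x \<in> S then 2 * \<psi> x - \<phi> x else \<phi> x)"

locale slab_decomposition =
  fixes d :: nat and V :: "real \<Rightarrow> real" and C2 :: real
    and L1 S L2 :: "site set"
  assumes finite: "finite L1" "finite S" "finite L2"
    and sublattice: "L1 \<subseteq> lattice d" "S \<subseteq> lattice d" "L2 \<subseteq> lattice d"
    and disjoint: "L1 \<inter> S = {}" "L1 \<inter> L2 = {}" "S \<inter> L2 = {}"
    and separated: "\<And>x y. x \<in> L1 \<Longrightarrow> y \<in> L2 \<Longrightarrow> \<not> adj d x y"
    and even: "\<And>s. V (- s) = V s"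
    and semiconvex: "\<And>c s. V (c + s) + V (c - s) \<le> 2 * V c + 2 * C2 * s\<^sup>2"
    and C2_nonneg: "C2 \<ge> 0"
begin

lemma swap: "slab_decomposition d V C2 L2 S L1"
  using finite sublattice disjoint even semiconvex C2_nonneg
  by unfold_locales (auto simp: adj_commute dest: separated)

lemma sum_over_union: "(\<Sum>x\<in>L1 \<union> S \<union> L2. g x) = (\<Sum>x\<in>L1. g x) + (\<Sum>x\<in>S. g x) + (\<Sum>x\<in>L2. g x)"
  using finite disjoint by (simp add: sum.union_disjoint Int_Un_distrib2)

end

locale slab_reflection = slab_decomposition +
  fixes \<psi> \<phi> :: "site \<Rightarrow> real"
  assumes near: "\<And>x. x \<in> S \<Longrightarrow> \<bar>\<phi> x - \<psi> x\<bar> \<le> 1"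
begin

lemma swap_reflection: "slab_reflection d V C2 L2 S L1 \<psi> \<phi>"
  using swap near by (simp add: slab_reflection_def slab_reflection_axioms_def)

lemma semiconvex_near:
  assumes "\<bar>s\<bar> \<le> r"
  shows "V (c + s) + V (c - s) \<le> 2 * V c + 2 * C2 * r\<^sup>2"
proof -
  have "s\<^sup>2 \<le> r\<^sup>2" using assms by (simp add: abs_le_square_iff[symmetric])
  then show ?thesis using semiconvex[of c s] C2_nonneg by (smt (verit) mult_left_mono)
qed

lemma bond_energy_reflect_outer:
  assumes x: "x \<in> L1" and y: "y \<in> neighbours d x"
  shows "bond_energy V (L1 \<union> S \<union> L2) \<psi> \<phi> x y + bond_energy V (L1 \<union> S \<union> L2) \<psi> (reflect_on S \<psi> \<phi>) x y
         - 2 * bond_energy V L1 \<psi> \<phi> x y \<le> (if y \<in> S then C2 - V (\<phi> x - \<psi> y) else 0)"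
proof -
  have "x \<notin> S" "x \<notin> L2" using x disjoint by auto
  have "y \<notin> L2" using separated[OF x] y by (auto simp: neighbours_def)
  then consider "y \<in> S" | "y \<in> L1" | "y \<notin> L1 \<union> S \<union> L2" by auto
  then show ?thesis
  proof cases
    case 1
    have "y \<notin> L1" using 1 disjoint by auto
    have "V (\<phi> x - \<psi> y + (\<psi> y - \<phi> y)) + V (\<phi> x - \<psi> y - (\<psi> y - \<phi> y)) \<le> 2 * V (\<phi> x - \<psi> y) + 2 * C2 * 1\<^sup>2"
      by (rule semiconvex_near) (use near[OF 1] in auto)
    then show ?thesis using 1 \<open>x \<notin> S\<close> \<open>y \<notin> L1\<close>
      by (simp add: bond_energy_def reflect_on_def algebra_simps)
  qed (use \<open>x \<notin> S\<close> \<open>y \<notin> L2\<close> disjoint in \<open>auto simp: bond_energy_def reflect_on_def\<close>)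
qed

lemma bond_energy_reflect_slice:
  assumes x: "x \<in> S"
  shows "bond_energy V (L1 \<union> S \<union> L2) \<psi> \<phi> x y + bond_energy V (L1 \<union> S \<union> L2) \<psi> (reflect_on S \<psi> \<phi>) x y
         \<le> 2 * \<bar>V (\<psi> x - \<psi> y)\<bar> + 4 * C2 + (if y \<in> L1 \<union> L2 then V (\<phi> y - \<psi> x) - C2 else 0)"
proof -
  have t: "\<bar>\<phi> x - \<psi> x\<bar> \<le> 1" using near[OF x] .
  consider "y \<in> S" | "y \<in> L1 \<union> L2" | "y \<notin> L1 \<union> S \<union> L2" by auto
  then show ?thesis
  proof cases
    case 1
    have "V (\<psi> x - \<psi> y + ((\<phi> x - \<psi> x) - (\<phi> y - \<psi> y))) + V (\<psi> x - \<psi> y - ((\<phi> x - \<psi> x) - (\<phi> y - \<psi> y)))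
        \<le> 2 * V (\<psi> x - \<psi> y) + 2 * C2 * 2\<^sup>2"
      by (rule semiconvex_near) (use t near[OF 1] in linarith)
    moreover have "y \<notin> L1 \<union> L2" using 1 disjoint by auto
    ultimately show ?thesis using 1 x
      by (simp add: bond_energy_def reflect_on_def algebra_simps)
  next
    case 2
    have "y \<notin> S" using 2 disjoint by auto
    have "V (\<psi> x - \<phi> y + (\<phi> x - \<psi> x)) + V (\<psi> x - \<phi> y - (\<phi> x - \<psi> x)) \<le> 2 * V (\<psi> x - \<phi> y) + 2 * C2 * 1\<^sup>2"
      by (rule semiconvex_near[OF t])
    moreover have "V (\<psi> x - \<phi> y) = V (\<phi> y - \<psi> x)" using even[of "\<phi> y - \<psi> x"] by simp
    ultimately show ?thesis using 2 x \<open>y \<notin> S\<close> C2_nonneg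
      by (simp add: bond_energy_def reflect_on_def algebra_simps)
  next
    case 3
    have "V (\<psi> x - \<psi> y + (\<phi> x - \<psi> x)) + V (\<psi> x - \<psi> y - (\<phi> x - \<psi> x)) \<le> 2 * V (\<psi> x - \<psi> y) + 2 * C2 * 1\<^sup>2"
      by (rule semiconvex_near[OF t])
    then show ?thesis using 3 x C2_nonneg
      by (simp add: bond_energy_def reflect_on_def algebra_simps)
  qed
qed

lemma sum_bond_energy_reflect_outer:
  "(\<Sum>x\<in>L1. \<Sum>y\<in>neighbours d x. bond_energy V (L1 \<union> S \<union> L2) \<psi> \<phi> x y
      + bond_energy V (L1 \<union> S \<union> L2) \<psi> (reflect_on S \<psi> \<phi>) x y)
   \<le> 2 * (\<Sum>x\<in>L1. \<Sum>y\<in>neighbours d x. bond_energy V L1 \<psi> \<phi> x y)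
     - (\<Sum>x\<in>L1. \<Sum>y\<in>neighbours d x. if y \<in> S then V (\<phi> x - \<psi> y) - C2 else 0)"
proof -
  have "(\<Sum>x\<in>L1. \<Sum>y\<in>neighbours d x. bond_energy V (L1 \<union> S \<union> L2) \<psi> \<phi> x y
      + bond_energy V (L1 \<union> S \<union> L2) \<psi> (reflect_on S \<psi> \<phi>) x y - 2 * bond_energy V L1 \<psi> \<phi> x y)
    \<le> (\<Sum>x\<in>L1. \<Sum>y\<in>neighbours d x. if y \<in> S then C2 - V (\<phi> x - \<psi> y) else 0)"
    by (intro sum_mono bond_energy_reflect_outer)
  moreover have "(\<Sum>x\<in>L1. \<Sum>y\<in>neighbours d x. if y \<in> S then C2 - V (\<phi> x - \<psi> y) else 0)
      = - (\<Sum>x\<in>L1. \<Sum>y\<in>neighbours d x. if y \<in> S then V (\<phi> x - \<psi> y) - C2 else 0)"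
    unfolding sum_negf[symmetric] by (intro sum.cong) auto
  ultimately show ?thesis by (simp add: sum_subtractf sum_distrib_left)
qed

lemma sum_bond_energy_reflect_le:
  "(\<Sum>x\<in>L1 \<union> S \<union> L2. \<Sum>y\<in>neighbours d x. bond_energy V (L1 \<union> S \<union> L2) \<psi> \<phi> x y)
   + (\<Sum>x\<in>L1 \<union> S \<union> L2. \<Sum>y\<in>neighbours d x. bond_energy V (L1 \<union> S \<union> L2) \<psi> (reflect_on S \<psi> \<phi>) x y)
   \<le> 2 * (\<Sum>x\<in>L1. \<Sum>y\<in>neighbours d x. bond_energy V L1 \<psi> \<phi> x y)
     + 2 * (\<Sum>x\<in>L2. \<Sum>y\<in>neighbours d x. bond_energy V L2 \<psi> \<phi> x y)
     + 2 * slice_interaction d V C2 S \<psi>"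
proof -
  interpret swapped: slab_reflection d V C2 L2 S L1 \<psi> \<phi> by (rule swap_reflection)
  have interaction: "(\<Sum>x\<in>S. \<Sum>y\<in>neighbours d x. 2 * \<bar>V (\<psi> x - \<psi> y)\<bar> + 4 * C2)
      = 2 * slice_interaction d V C2 S \<psi>"
    by (simp add: slice_interaction_def sum_distrib_left)
  (* A bond between x \<in> S and y \<in> L1 \<union> L2 is not controlled by itself: the reflection may cost
     flux y x at x but then gains as much at y, so this flux is moved across the interface. *)
  define flux where "flux x y = V (\<phi> x - \<psi> y) - C2" for x y
  define E where "E x = (\<Sum>y\<in>neighbours d x. bond_energy V (L1 \<union> S \<union> L2) \<psi> \<phi> x y
      + bond_energy V (L1 \<union> S \<union> L2) \<psi> (reflect_on S \<psi> \<phi>) x y)" for x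
  have "L2 \<union> S \<union> L1 = L1 \<union> S \<union> L2" by auto
  then have outer: "(\<Sum>x\<in>K. E x) \<le> 2 * (\<Sum>x\<in>K. \<Sum>y\<in>neighbours d x. bond_energy V K \<psi> \<phi> x y)
      - (\<Sum>x\<in>K. \<Sum>y\<in>neighbours d x. if y \<in> S then flux x y else 0)" if "K = L1 \<or> K = L2" for K
    using that sum_bond_energy_reflect_outer swapped.sum_bond_energy_reflect_outer
    unfolding E_def flux_def by auto
  have "(\<Sum>x\<in>S. E x) \<le> (\<Sum>x\<in>S. \<Sum>y\<in>neighbours d x. 2 * \<bar>V (\<psi> x - \<psi> y)\<bar> + 4 * C2
      + (if y \<in> L1 \<union> L2 then flux y x else 0))"
    unfolding E_def flux_def by (intro sum_mono bond_energy_reflect_slice)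
  also have "\<dots> = (\<Sum>x\<in>S. \<Sum>y\<in>neighbours d x. 2 * \<bar>V (\<psi> x - \<psi> y)\<bar> + 4 * C2)
      + (\<Sum>y\<in>L1 \<union> L2. \<Sum>x\<in>neighbours d y. if x \<in> S then flux y x else 0)"
    using sum_neighbours_swap[of S d "L1 \<union> L2" "\<lambda>x y. flux y x"] finite sublattice
    by (simp add: sum.distrib)
  also have "(\<Sum>y\<in>L1 \<union> L2. \<Sum>x\<in>neighbours d y. if x \<in> S then flux y x else 0)
      = (\<Sum>x\<in>L1. \<Sum>y\<in>neighbours d x. if y \<in> S then flux x y else 0)
        + (\<Sum>x\<in>L2. \<Sum>y\<in>neighbours d x. if y \<in> S then flux x y else 0)"
    using finite disjoint by (simp add: sum.union_disjoint)
  finally show ?thesis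
    using outer[of L1] outer[of L2] sum_over_union[of E] interaction unfolding E_def
    by (simp add: sum.distrib)
qed

lemma Ham_reflect_le:
  "Ham d V (L1 \<union> S \<union> L2) \<psi> \<xi> \<phi> + Ham d V (L1 \<union> S \<union> L2) \<psi> \<xi> (reflect_on S \<psi> \<phi>)
   \<le> 2 * Ham d V L1 \<psi> \<xi> \<phi> + 2 * Ham d V L2 \<psi> \<xi> \<phi> - 2 * (\<Sum>x\<in>S. \<xi> x * \<psi> x)
     + 2 * slice_interaction d V C2 S \<psi>"
proof -
  have "(\<Sum>x\<in>K. \<xi> x * reflect_on S \<psi> \<phi> x) = (\<Sum>x\<in>K. \<xi> x * \<phi> x)" if "K \<inter> S = {}" for K
    using that by (intro sum.cong) (auto simp: reflect_on_def)
  moreover have "(\<Sum>x\<in>S. \<xi> x * \<phi> x) + (\<Sum>x\<in>S. \<xi> x * reflect_on S \<psi> \<phi> x) = 2 * (\<Sum>x\<in>S. \<xi> x * \<psi> x)"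
    by (simp add: reflect_on_def sum.distrib[symmetric] sum_distrib_left algebra_simps)
  ultimately have "(\<Sum>x\<in>L1 \<union> S \<union> L2. \<xi> x * \<phi> x) + (\<Sum>x\<in>L1 \<union> S \<union> L2. \<xi> x * reflect_on S \<psi> \<phi> x)
      = 2 * (\<Sum>x\<in>L1. \<xi> x * \<phi> x) + 2 * (\<Sum>x\<in>L2. \<xi> x * \<phi> x) + 2 * (\<Sum>x\<in>S. \<xi> x * \<psi> x)"
    using disjoint unfolding sum_over_union by (simp add: Int_commute)
  moreover have "finite (L1 \<union> S \<union> L2)" "L1 \<union> S \<union> L2 \<subseteq> lattice d"
    using finite sublattice by auto
  ultimately show ?thesis
    using sum_bond_energy_reflect_le
      Ham_eq_sum_bond_energy[of "L1 \<union> S \<union> L2" d V \<psi> \<xi> \<phi>]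
      Ham_eq_sum_bond_energy[of "L1 \<union> S \<union> L2" d V \<psi> \<xi> "reflect_on S \<psi> \<phi>"]
      Ham_eq_sum_bond_energy[OF finite(1) sublattice(1), of V \<psi> \<xi> \<phi>]
      Ham_eq_sum_bond_energy[OF finite(3) sublattice(3), of V \<psi> \<xi> \<phi>]
    by linarith
qed

lemma exp_Ham_reflect_ge:
  "2 * exp ((\<Sum>x\<in>S. \<xi> x * \<psi> x) - slice_interaction d V C2 S \<psi>)
       * exp (- Ham d V L1 \<psi> \<xi> \<phi>) * exp (- Ham d V L2 \<psi> \<xi> \<phi>)
   \<le> exp (- Ham d V (L1 \<union> S \<union> L2) \<psi> \<xi> \<phi>) + exp (- Ham d V (L1 \<union> S \<union> L2) \<psi> \<xi> (reflect_on S \<psi> \<phi>))"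
proof -
  have "2 * exp ((\<Sum>x\<in>S. \<xi> x * \<psi> x) - slice_interaction d V C2 S \<psi>)
       * exp (- Ham d V L1 \<psi> \<xi> \<phi>) * exp (- Ham d V L2 \<psi> \<xi> \<phi>)
      = 2 * exp ((\<Sum>x\<in>S. \<xi> x * \<psi> x) - slice_interaction d V C2 S \<psi> - Ham d V L1 \<psi> \<xi> \<phi> - Ham d V L2 \<psi> \<xi> \<phi>)"
    by (simp add: exp_diff exp_minus exp_add field_simps)
  also have "\<dots> \<le> 2 * exp ((- Ham d V (L1 \<union> S \<union> L2) \<psi> \<xi> \<phi> - Ham d V (L1 \<union> S \<union> L2) \<psi> \<xi> (reflect_on S \<psi> \<phi>)) / 2)"
    using Ham_reflect_le[of \<xi>] by simp
  also have "\<dots> \<le> exp (- Ham d V (L1 \<union> S \<union> L2) \<psi> \<xi> \<phi>) + exp (- Ham d V (L1 \<union> S \<union> L2) \<psi> \<xi> (reflect_on S \<psi> \<phi>))"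
    using exp_add_exp_ge[of "- Ham d V (L1 \<union> S \<union> L2) \<psi> \<xi> \<phi>"
        "- Ham d V (L1 \<union> S \<union> L2) \<psi> \<xi> (reflect_on S \<psi> \<phi>)"] by simp
  finally show ?thesis .
qed

end

lemma slab_decomposition_box:
  fixes V :: "real \<Rightarrow> real"
  assumes d: "d \<ge> 1" and even: "\<And>s. V (- s) = V s"
    and semiconvex: "\<And>c s. V (c + s) + V (c - s) \<le> 2 * V c + 2 * C2 * s\<^sup>2" and C2: "C2 \<ge> 0"
  shows "slab_decomposition d V C2 (box_strip d a l (a 1) (l1' - 1)) (box_slice d a l l1')
           (box_strip d a l (l1' + 1) (l 1))"
proof
  show "finite (box_strip d a l (a 1) (l1' - 1))" "finite (box_slice d a l l1')"
    "finite (box_strip d a l (l1' + 1) (l 1))"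
    by (simp_all add: box_slice_eq_box_strip box_strip_eq_box[OF d] finite_box)
  fix x y assume "x \<in> box_strip d a l (a 1) (l1' - 1)" "y \<in> box_strip d a l (l1' + 1) (l 1)"
  then show "\<not> adj d x y" using adj_coordinate_le[of d x y 1] d by (auto simp: box_strip_def)
qed (use even semiconvex C2 in \<open>auto simp: box_strip_def box_slice_def\<close>)

lemma slice_interaction_psi_le:
  fixes V :: "real \<Rightarrow> real"
  assumes even: "\<And>s. V (- s) = V s" and S: "S \<subseteq> lattice d" and C2: "C2 \<ge> 0"
  shows "slice_interaction d V C2 S (psi d u) \<le> real (card S) * (2 * real d * ((\<Sum>i=1..d. \<bar>V (u i)\<bar>) + 2 * C2))"
proof -
  have "(\<Sum>y\<in>neighbours d x. \<bar>V (psi d u x - psi d u y)\<bar> + 2 * C2)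
      \<le> 2 * real d * ((\<Sum>i=1..d. \<bar>V (u i)\<bar>) + 2 * C2)" if x: "x \<in> S" for x
  proof -
    have "(\<Sum>y\<in>neighbours d x. \<bar>V (psi d u x - psi d u y)\<bar> + 2 * C2)
        \<le> real (card (neighbours d x)) * ((\<Sum>i=1..d. \<bar>V (u i)\<bar>) + 2 * C2)"
      using abs_V_psi_neighbour_le[where V=V, OF even, of x d] x S by (intro sum_bounded_above) auto
    also have "\<dots> \<le> 2 * real d * ((\<Sum>i=1..d. \<bar>V (u i)\<bar>) + 2 * C2)"
      using card_neighbours_le[of x d] x S C2 by (intro mult_right_mono) (auto intro: sum_nonneg)
    finally show ?thesis .
  qed
  then show ?thesis unfolding slice_interaction_def by (rule sum_bounded_above)
qed

section \<open>Product measures on field configurations\<close>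

lemma emeasure_lborel_reflect:
  assumes "B \<in> sets lborel"
  shows "emeasure lborel ((\<lambda>t::real. c - t) -` B) = emeasure lborel B"
proof -
  have "lborel = distr lborel borel (\<lambda>x::real. c + -1 * x)"
    using lborel_real_affine[of "-1" c] by (simp add: density_1 one_ennreal_def[symmetric])
  then have "emeasure lborel B = emeasure (distr lborel borel (\<lambda>x::real. c + -1 * x)) B"
    by simp
  also have "\<dots> = emeasure lborel ((\<lambda>x::real. c + -1 * x) -` B \<inter> space lborel)"
    by (rule emeasure_distr) (use assms in simp_all)
  also have "(\<lambda>x::real. c + -1 * x) -` B \<inter> space lborel = (\<lambda>t::real. c - t) -` B" by auto
  finally show ?thesis by simp
qed

lemma measurable_reflect_on:
  "(\<lambda>\<phi>. restrict (reflect_on S \<psi> \<phi>) \<Lambda>) \<in> measurable (field_measure \<Lambda>) (field_measure \<Lambda>)"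
proof (rule measurable_restrict)
  fix x assume x: "x \<in> \<Lambda>"
  have "(\<lambda>\<phi>. \<phi> x) \<in> borel_measurable (field_measure \<Lambda>)"
    using measurable_component_singleton[OF x, of "\<lambda>_. lborel"] by simp
  then show "(\<lambda>\<phi>. reflect_on S \<psi> \<phi> x) \<in> measurable (field_measure \<Lambda>) lborel"
    by (simp add: reflect_on_def)
qed

lemma distr_reflect_on:
  assumes fin: "finite \<Lambda>"
  shows "distr (field_measure \<Lambda>) (field_measure \<Lambda>) (\<lambda>\<phi>. restrict (reflect_on S \<psi> \<phi>) \<Lambda>)
       = field_measure \<Lambda>"
proof -
  interpret product_sigma_finite "\<lambda>_::site. lborel::real measure" by standard
  show ?thesis
  proof (rule PiM_eqI[OF fin])
    fix A :: "site \<Rightarrow> real set" assume A: "\<And>i. i \<in> \<Lambda> \<Longrightarrow> A i \<in> sets lborel"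
    define A' where "A' i = (if i \<in> S then (\<lambda>t. 2 * \<psi> i - t) -` A i else A i)" for i
    have A': "A' i \<in> sets lborel" if "i \<in> \<Lambda>" for i
      using A[OF that] measurable_sets[of "\<lambda>t::real. 2 * \<psi> i - t" lborel lborel "A i"]
      by (simp add: A'_def)
    have "emeasure (distr (field_measure \<Lambda>) (field_measure \<Lambda>) (\<lambda>\<phi>. restrict (reflect_on S \<psi> \<phi>) \<Lambda>)) (PiE \<Lambda> A)
        = emeasure (field_measure \<Lambda>) (PiE \<Lambda> A')"
      using A fin
      by (subst emeasure_distr[OF measurable_reflect_on])
         (auto intro!: sets_PiM_I_finite arg_cong[where f = "emeasure _"]
           simp: A'_def reflect_on_def space_PiM PiE_iff split: if_splits)
    also have "\<dots> = (\<Prod>i\<in>\<Lambda>. emeasure lborel (A i))"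
      using A emeasure_lborel_reflect by (auto simp: emeasure_PiM[OF fin A'] A'_def intro!: prod.cong)
    finally show "emeasure (distr (field_measure \<Lambda>) (field_measure \<Lambda>)
        (\<lambda>\<phi>. restrict (reflect_on S \<psi> \<phi>) \<Lambda>)) (PiE \<Lambda> A) = (\<Prod>i\<in>\<Lambda>. emeasure lborel (A i))" .
  qed simp
qed

lemma nn_integral_reflect_on:
  assumes "finite \<Lambda>" and "f \<in> borel_measurable (field_measure \<Lambda>)"
  shows "(\<integral>\<^sup>+\<phi>. f (restrict (reflect_on S \<psi> \<phi>) \<Lambda>) \<partial>field_measure \<Lambda>) = (\<integral>\<^sup>+\<phi>. f \<phi> \<partial>field_measure \<Lambda>)"
proof -
  have "(\<integral>\<^sup>+\<phi>. f \<phi> \<partial>field_measure \<Lambda>)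
      = (\<integral>\<^sup>+\<phi>. f \<phi> \<partial>distr (field_measure \<Lambda>) (field_measure \<Lambda>) (\<lambda>\<phi>. restrict (reflect_on S \<psi> \<phi>) \<Lambda>))"
    by (simp add: distr_reflect_on[OF assms(1)])
  also have "\<dots> = (\<integral>\<^sup>+\<phi>. f (restrict (reflect_on S \<psi> \<phi>) \<Lambda>) \<partial>field_measure \<Lambda>)"
    by (rule nn_integral_distr[OF measurable_reflect_on]) (use assms(2) in simp)
  finally show ?thesis ..
qed

lemma nn_integral_field_measure_split:
  assumes IJ: "I \<inter> J = {}" "finite I" "finite J"
    and f: "f \<in> borel_measurable (field_measure I)" and g: "g \<in> borel_measurable (field_measure J)"
  shows "(\<integral>\<^sup>+\<phi>. f (restrict \<phi> I) * g (restrict \<phi> J) \<partial>field_measure (I \<union> J))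
       = (\<integral>\<^sup>+\<phi>. f \<phi> \<partial>field_measure I) * (\<integral>\<^sup>+\<phi>. g \<phi> \<partial>field_measure J)"
proof -
  interpret product_sigma_finite "\<lambda>_::site. lborel::real measure" by standard
  have "(\<lambda>\<phi>. f (restrict \<phi> I) * g (restrict \<phi> J)) \<in> borel_measurable (field_measure (I \<union> J))"
    by (intro borel_measurable_times_ennreal measurable_compose[OF measurable_restrict_subset f]
        measurable_compose[OF measurable_restrict_subset g]) auto
  then have "(\<integral>\<^sup>+\<phi>. f (restrict \<phi> I) * g (restrict \<phi> J) \<partial>field_measure (I \<union> J))
      = (\<integral>\<^sup>+x. (\<integral>\<^sup>+y. f (restrict (merge I J (x, y)) I) * g (restrict (merge I J (x, y)) J)
          \<partial>field_measure J) \<partial>field_measure I)"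
    by (rule product_nn_integral_fold[OF IJ])
  also have "\<dots> = (\<integral>\<^sup>+x. (\<integral>\<^sup>+y. f x * g y \<partial>field_measure J) \<partial>field_measure I)"
    using IJ(1) by (intro nn_integral_cong) (auto simp: space_PiM restrict_PiE_iff)
  also have "\<dots> = (\<integral>\<^sup>+x. f x * (\<integral>\<^sup>+y. g y \<partial>field_measure J) \<partial>field_measure I)"
    by (rule nn_integral_cong) (rule nn_integral_cmult[OF g])
  also have "\<dots> = (\<integral>\<^sup>+\<phi>. f \<phi> \<partial>field_measure I) * (\<integral>\<^sup>+\<phi>. g \<phi> \<partial>field_measure J)"
    by (rule nn_integral_multc[OF f])
  finally show ?thesis .
qed

lemma nn_integral_gaussian_finite:
  assumes "(c::real) > 0"
  shows "(\<integral>\<^sup>+t. ennreal (exp (- c * t\<^sup>2)) \<partial>lborel) < \<infinity>"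
proof -
  define \<sigma> where "\<sigma> = sqrt (1 / (2 * c))"
  have \<sigma>: "\<sigma> > 0" "\<sigma>\<^sup>2 = 1 / (2 * c)" using assms by (simp_all add: \<sigma>_def)
  define k where "k = sqrt (2 * pi * \<sigma>\<^sup>2)"
  have k: "k > 0" using \<sigma>(1) by (simp add: k_def)
  have "k = sqrt (pi / c)" unfolding k_def \<sigma>(2) by simp
  then have "exp (- c * t\<^sup>2) = k * normal_density 0 \<sigma> t" for t
    using k assms unfolding normal_density_def k_def[symmetric] \<sigma>(2) by (simp add: field_simps)
  then have "(\<integral>\<^sup>+t. ennreal (exp (- c * t\<^sup>2)) \<partial>lborel) = ennreal k * (\<integral>\<^sup>+t. ennreal (normal_density 0 \<sigma> t) \<partial>lborel)"
    using k by (simp add: ennreal_mult nn_integral_cmult[symmetric])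
  also have "(\<integral>\<^sup>+t. ennreal (normal_density 0 \<sigma> t) \<partial>lborel) = 1"
    using nn_integral_eq_integral[OF integrable_normal_density[OF \<sigma>(1)]] integral_normal_density[OF \<sigma>(1)]
    by simp
  finally show ?thesis by simp
qed

lemma nn_integral_field_measure_pos:
  assumes fin: "finite \<Lambda>" and f: "f \<in> borel_measurable (field_measure \<Lambda>)" and pos: "\<And>\<phi>. f \<phi> > 0"
  shows "(\<integral>\<^sup>+\<phi>. f \<phi> \<partial>field_measure \<Lambda>) > 0"
proof (rule ccontr)
  interpret product_sigma_finite "\<lambda>_::site. lborel::real measure" by standard
  assume "\<not> ?thesis"
  then have "AE \<phi> in field_measure \<Lambda>. f \<phi> = 0" using nn_integral_0_iff_AE[OF f] by simp
  then have "AE \<phi> in field_measure \<Lambda>. False"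
    by (rule AE_mp) (use pos in \<open>auto simp: less_le\<close>)
  then have "emeasure (field_measure \<Lambda>) (space (field_measure \<Lambda>)) = 0"
    using ae_filter_eq_bot_iff trivial_limit_def by blast
  moreover have "emeasure (field_measure \<Lambda>) (space (field_measure \<Lambda>)) = (\<Prod>i\<in>\<Lambda>. \<infinity>)"
    using emeasure_PiM[OF fin, of "\<lambda>_. UNIV"] by (simp add: space_PiM)
  ultimately show False using fin by simp
qed

section \<open>Coercivity and finiteness of the partition function\<close>

(* Backward difference in direction 1 with boundary values \<psi>; summing its square along the
   chain x, x - e1, x - 2 e1, ... until it leaves \<Lambda> controls \<phi> x (a Poincare inequality). *)
definition back_diff :: "site set \<Rightarrow> (site \<Rightarrow> real) \<Rightarrow> (site \<Rightarrow> real) \<Rightarrow> site \<Rightarrow> real" where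
  "back_diff \<Lambda> \<psi> \<phi> x = \<phi> x - (if x(1 := x 1 - 1) \<in> \<Lambda> then \<phi> else \<psi>) (x(1 := x 1 - 1))"

lemma square_le_back_diff_step:
  fixes \<psi> \<phi> :: "site \<Rightarrow> real"
  assumes d: "d \<ge> 1" and fin: "finite \<Lambda>" and sub: "\<Lambda> \<subseteq> lattice d" and x: "x \<in> \<Lambda>"
  shows "(\<phi> x)\<^sup>2 \<le> 2 * (if x(1 := x 1 - 1) \<in> \<Lambda> then (\<phi> (x(1 := x 1 - 1)))\<^sup>2 else (\<Sum>y\<in>bdry d \<Lambda>. (\<psi> y)\<^sup>2))
           + 2 * (\<Sum>z\<in>\<Lambda>. (back_diff \<Lambda> \<psi> \<phi> z)\<^sup>2)"
proof -
  define p where "p = x(1 := x 1 - 1)"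
  have sq: "c\<^sup>2 \<le> 2 * a\<^sup>2 + 2 * (c - a)\<^sup>2" for a c :: real
    by (smt (verit) power2_sum zero_le_power2 power2_diff)
  have "(back_diff \<Lambda> \<psi> \<phi> x)\<^sup>2 \<le> (\<Sum>z\<in>\<Lambda>. (back_diff \<Lambda> \<psi> \<phi> z)\<^sup>2)"
    by (rule member_le_sum) (use x fin in auto)
  moreover have "back_diff \<Lambda> \<psi> \<phi> x = \<phi> x - (if p \<in> \<Lambda> then \<phi> p else \<psi> p)"
    by (simp add: back_diff_def p_def)
  moreover have "(\<psi> p)\<^sup>2 \<le> (\<Sum>y\<in>bdry d \<Lambda>. (\<psi> y)\<^sup>2)" if "p \<notin> \<Lambda>"
  proof -
    have "p \<in> bdry d \<Lambda>" using predecessor_in_neighbours[OF d] x sub that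
      by (auto simp: p_def bdry_def neighbours_def adj_commute)
    then show ?thesis by (rule member_le_sum) (use finite_bdry[OF fin sub] in auto)
  qed
  ultimately show ?thesis
    using sq[of "\<phi> x" "\<phi> p"] sq[of "\<phi> x" "\<psi> p"] unfolding p_def[symmetric]
    by (cases "p \<in> \<Lambda>"; simp; linarith)
qed

lemma square_le_back_diff_chain:
  fixes \<psi> \<phi> :: "site \<Rightarrow> real"
  assumes d: "d \<ge> 1" and fin: "finite \<Lambda>" and sub: "\<Lambda> \<subseteq> lattice d"
    and lower: "\<And>z. z \<in> \<Lambda> \<Longrightarrow> s \<le> z 1" and x: "x \<in> \<Lambda>"
  shows "(\<phi> x)\<^sup>2 \<le> (2 ^ (nat (x 1 - s) + 2) - 2)
           * ((\<Sum>y\<in>bdry d \<Lambda>. (\<psi> y)\<^sup>2) + (\<Sum>z\<in>\<Lambda>. (back_diff \<Lambda> \<psi> \<phi> z)\<^sup>2))"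
  using x
proof (induction "nat (x 1 - s)" arbitrary: x)
  define \<Psi> where "\<Psi> = (\<Sum>y\<in>bdry d \<Lambda>. (\<psi> y)\<^sup>2)"
  define G where "G = (\<Sum>z\<in>\<Lambda>. (back_diff \<Lambda> \<psi> \<phi> z)\<^sup>2)"
  have \<Psi>G: "\<Psi> \<ge> 0" "G \<ge> 0" by (simp_all add: \<Psi>_def G_def sum_nonneg)
  note step = square_le_back_diff_step[OF d fin sub, of _ \<phi> \<psi>, folded \<Psi>_def G_def]
  {
    case 0
    then have "x(1 := x 1 - 1) \<notin> \<Lambda>" using lower[of "x(1 := x 1 - 1)"] by auto
    then show ?case using step[OF 0(2)] \<open>0 = nat (x 1 - s)\<close> unfolding \<Psi>_def G_def by simp
  next
    case (Suc n)
    have "2 * (\<Psi> + G) \<le> (2 ^ (Suc n + 2) - 2) * (\<Psi> + G)"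
      using power_increasing[of 2 "Suc n + 2" "2::real"] \<Psi>G by (intro mult_right_mono) auto
    moreover have "(\<phi> (x(1 := x 1 - 1)))\<^sup>2 \<le> (2 ^ (n + 2) - 2) * (\<Psi> + G)" if "x(1 := x 1 - 1) \<in> \<Lambda>"
    proof -
      have n: "n = nat ((x(1 := x 1 - 1)) 1 - s)" using Suc.hyps(2) by simp
      show ?thesis using Suc.hyps(1)[OF n that] unfolding n[symmetric] \<Psi>_def G_def .
    qed
    ultimately show ?case
      using step[OF Suc.prems] \<Psi>G \<open>Suc n = nat (x 1 - s)\<close>[symmetric]
      unfolding \<Psi>_def[symmetric] G_def[symmetric]
      by (cases "x(1 := x 1 - 1) \<in> \<Lambda>") (auto simp: algebra_simps)
  }
qed

lemma Ham_ge_back_diff: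
  fixes V :: "real \<Rightarrow> real"
  assumes d: "d \<ge> 1" and fin: "finite \<Lambda>" and sub: "\<Lambda> \<subseteq> lattice d"
    and B: "B \<ge> 0" and lower: "\<And>s. V s \<ge> A * s\<^sup>2 - B" and A: "A > 0"
  shows "Ham d V \<Lambda> \<psi> \<xi> \<phi> \<ge> A / 2 * (\<Sum>x\<in>\<Lambda>. (back_diff \<Lambda> \<psi> \<phi> x)\<^sup>2)
           - B * (\<Sum>x\<in>\<Lambda>. real (card (neighbours d x))) - (\<Sum>x\<in>\<Lambda>. \<xi> x * \<phi> x)"
proof -
  have V_ge: "V s \<ge> - B" for s using lower[of s] A by (smt (verit) mult_nonneg_nonneg zero_le_power2)
  have site: "(\<Sum>y\<in>neighbours d x. bond_energy V \<Lambda> \<psi> \<phi> x y)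
      \<ge> A / 2 * (back_diff \<Lambda> \<psi> \<phi> x)\<^sup>2 - B * real (card (neighbours d x))" if x: "x \<in> \<Lambda>" for x
  proof -
    define p where "p = x(1 := x 1 - 1)"
    have p: "p \<in> neighbours d x" unfolding p_def using predecessor_in_neighbours[OF d] x sub by auto
    have fn: "finite (neighbours d x)" using finite_neighbours x sub by blast
    have "bond_energy V \<Lambda> \<psi> \<phi> x y \<ge> - B" for y
      using V_ge[of "\<phi> x - \<phi> y"] V_ge[of "\<phi> x - \<psi> y"] B by (simp add: bond_energy_def)
    then have "(\<Sum>y\<in>neighbours d x - {p}. - B) \<le> (\<Sum>y\<in>neighbours d x - {p}. bond_energy V \<Lambda> \<psi> \<phi> x y)"
      by (intro sum_mono)
    then have rest: "(\<Sum>y\<in>neighbours d x - {p}. bond_energy V \<Lambda> \<psi> \<phi> x y)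
        \<ge> - B * real (card (neighbours d x) - 1)"
      using fn p by (simp add: mult.commute)
    have "A / 2 * (back_diff \<Lambda> \<psi> \<phi> x)\<^sup>2 \<le> A * (back_diff \<Lambda> \<psi> \<phi> x)\<^sup>2" using A by simp
    then have "bond_energy V \<Lambda> \<psi> \<phi> x p \<ge> A / 2 * (back_diff \<Lambda> \<psi> \<phi> x)\<^sup>2 - B"
      using lower[of "back_diff \<Lambda> \<psi> \<phi> x"] B
      unfolding bond_energy_def back_diff_def p_def[symmetric] by auto
    moreover have "card (neighbours d x) \<ge> 1" using fn p by (auto simp: Suc_le_eq card_gt_0_iff)
    ultimately show ?thesis
      using rest sum.remove[OF fn p, of "bond_energy V \<Lambda> \<psi> \<phi> x"] B
      by (simp add: algebra_simps)
  qed
  show ?thesis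
    using sum_mono[OF site] Ham_eq_sum_bond_energy[OF fin sub, of V \<psi> \<xi> \<phi>]
    by (simp add: sum_subtractf sum_distrib_left)
qed

lemma sum_square_le_back_diff:
  fixes \<psi> :: "site \<Rightarrow> real"
  assumes d: "d \<ge> 1" and fin: "finite \<Lambda>" and sub: "\<Lambda> \<subseteq> lattice d"
  obtains M where "M \<ge> 0"
    and "\<And>\<phi>. (\<Sum>x\<in>\<Lambda>. (\<phi> x)\<^sup>2) \<le> M * ((\<Sum>y\<in>bdry d \<Lambda>. (\<psi> y)\<^sup>2) + (\<Sum>x\<in>\<Lambda>. (back_diff \<Lambda> \<psi> \<phi> x)\<^sup>2))"
proof
  define s where "s = - (\<Sum>x\<in>\<Lambda>. \<bar>x 1\<bar>)"
  have s: "s \<le> x 1" if "x \<in> \<Lambda>" for x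
    using member_le_sum[of x \<Lambda> "\<lambda>x. \<bar>x 1\<bar>"] that fin unfolding s_def by auto
  have "(2::real) \<le> 2 ^ (k + 2)" for k
    using power_increasing[of 1 "k + 2" "2::real"] by simp
  then show "(\<Sum>x\<in>\<Lambda>. 2 ^ (nat (x 1 - s) + 2) - 2 :: real) \<ge> 0"
    by (intro sum_nonneg) (simp only: diff_ge_0_iff_ge)
  show "(\<Sum>x\<in>\<Lambda>. (\<phi> x)\<^sup>2) \<le> (\<Sum>x\<in>\<Lambda>. 2 ^ (nat (x 1 - s) + 2) - 2)
      * ((\<Sum>y\<in>bdry d \<Lambda>. (\<psi> y)\<^sup>2) + (\<Sum>x\<in>\<Lambda>. (back_diff \<Lambda> \<psi> \<phi> x)\<^sup>2))" for \<phi>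
    unfolding sum_distrib_right
    by (intro sum_mono square_le_back_diff_chain[OF d fin sub]) (use s in blast)+
qed

lemma sum_mult_le_young:
  fixes f g :: "'a \<Rightarrow> real"
  assumes c: "c > 0"
  shows "(\<Sum>x\<in>I. f x * g x) \<le> c / 2 * (\<Sum>x\<in>I. (g x)\<^sup>2) + (\<Sum>x\<in>I. (f x)\<^sup>2) / (2 * c)"
proof -
  have "f x * g x \<le> c / 2 * (g x)\<^sup>2 + (f x)\<^sup>2 / (2 * c)" for x
  proof -
    have "0 \<le> (c * g x - f x)\<^sup>2 / (2 * c)" using c by simp
    also have "\<dots> = c / 2 * (g x)\<^sup>2 + (f x)\<^sup>2 / (2 * c) - f x * g x"
      using c by (simp add: power2_eq_square field_simps)
    finally show ?thesis by simp
  qed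
  then have "(\<Sum>x\<in>I. f x * g x) \<le> (\<Sum>x\<in>I. c / 2 * (g x)\<^sup>2 + (f x)\<^sup>2 / (2 * c))"
    by (intro sum_mono)
  also have "\<dots> = c / 2 * (\<Sum>x\<in>I. (g x)\<^sup>2) + (\<Sum>x\<in>I. (f x)\<^sup>2) / (2 * c)"
    by (simp add: sum.distrib sum_distrib_left sum_divide_distrib)
  finally show ?thesis .
qed

lemma Ham_coercive:
  fixes V :: "real \<Rightarrow> real"
  assumes d: "d \<ge> 1" and fin: "finite \<Lambda>" and sub: "\<Lambda> \<subseteq> lattice d"
    and A: "A > 0" and lower: "\<And>s. V s \<ge> A * s\<^sup>2 - B"
  shows "\<exists>\<epsilon>>0. \<exists>K. \<forall>\<phi>. Ham d V \<Lambda> \<psi> \<xi> \<phi> \<ge> \<epsilon> * (\<Sum>x\<in>\<Lambda>. (\<phi> x)\<^sup>2) - K"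
proof -
  define \<Psi> where "\<Psi> = (\<Sum>y\<in>bdry d \<Lambda>. (\<psi> y)\<^sup>2)"
  obtain M where M: "M \<ge> 0"
    and poincare: "\<And>\<phi>. (\<Sum>x\<in>\<Lambda>. (\<phi> x)\<^sup>2) \<le> M * (\<Psi> + (\<Sum>x\<in>\<Lambda>. (back_diff \<Lambda> \<psi> \<phi> x)\<^sup>2))"
    using sum_square_le_back_diff[OF d fin sub] unfolding \<Psi>_def by blast
  define c where "c = A / (2 * (M + 1))"
  have c: "c > 0" using A M by (simp add: c_def)
  define K where "K = A / 2 * \<Psi> + max B 0 * (\<Sum>x\<in>\<Lambda>. real (card (neighbours d x)))
      + (\<Sum>x\<in>\<Lambda>. (\<xi> x)\<^sup>2) / (2 * c)"
  have "Ham d V \<Lambda> \<psi> \<xi> \<phi> \<ge> c / 2 * (\<Sum>x\<in>\<Lambda>. (\<phi> x)\<^sup>2) - K" for \<phi>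
  proof -
    define G where "G = (\<Sum>x\<in>\<Lambda>. (back_diff \<Lambda> \<psi> \<phi> x)\<^sup>2)"
    have "\<Psi> + G \<ge> 0" by (simp add: \<Psi>_def G_def sum_nonneg)
    then have "M * (\<Psi> + G) \<le> (M + 1) * (\<Psi> + G)" by (intro mult_right_mono) auto
    then have "c * (\<Sum>x\<in>\<Lambda>. (\<phi> x)\<^sup>2) \<le> c * ((M + 1) * (\<Psi> + G))"
      using c poincare[of \<phi>] unfolding G_def[symmetric] by (intro mult_left_mono) auto
    also have "\<dots> = A / 2 * (\<Psi> + G)" using M by (simp add: c_def field_simps)
    finally have gradient: "c * (\<Sum>x\<in>\<Lambda>. (\<phi> x)\<^sup>2) \<le> A / 2 * (\<Psi> + G)" .
    note field = sum_mult_le_young[OF c, of \<xi> \<phi> \<Lambda>]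
    have "V s \<ge> A * s\<^sup>2 - max B 0" for s using lower[of s] by simp
    then have "Ham d V \<Lambda> \<psi> \<xi> \<phi> \<ge> A / 2 * G - max B 0 * (\<Sum>x\<in>\<Lambda>. real (card (neighbours d x)))
        - (\<Sum>x\<in>\<Lambda>. \<xi> x * \<phi> x)"
      unfolding G_def by (intro Ham_ge_back_diff[OF d fin sub _ _ A]) auto
    then show ?thesis using gradient field unfolding K_def by (simp add: algebra_simps)
  qed
  then show ?thesis using c by (intro exI[of _ "c / 2"]) auto
qed

definition boltzmann ::
    "nat \<Rightarrow> (real \<Rightarrow> real) \<Rightarrow> site set \<Rightarrow> (site \<Rightarrow> real) \<Rightarrow> (site \<Rightarrow> real) \<Rightarrow> (site \<Rightarrow> real) \<Rightarrow> ennreal" where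
  "boltzmann d V \<Lambda> \<psi> \<xi> \<phi> = ennreal (exp (- Ham d V \<Lambda> \<psi> \<xi> \<phi>))"

lemma borel_measurable_boltzmann:
  assumes "finite \<Lambda>" and "\<Lambda> \<subseteq> I" and "continuous_on UNIV V"
  shows "boltzmann d V \<Lambda> \<psi> \<xi> \<in> borel_measurable (field_measure I)"
proof -
  note [measurable] = borel_measurable_Ham[OF assms]
  show ?thesis unfolding boltzmann_def by measurable
qed

lemma boltzmann_restrict: "\<Lambda> \<subseteq> I \<Longrightarrow> boltzmann d V \<Lambda> \<psi> \<xi> (restrict \<phi> I) = boltzmann d V \<Lambda> \<psi> \<xi> \<phi>"
  unfolding boltzmann_def by (subst Ham_cong[of \<Lambda> _ \<phi>]) auto

lemma nn_integral_boltzmann_finite: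
  fixes V :: "real \<Rightarrow> real"
  assumes d: "d \<ge> 1" and fin: "finite \<Lambda>" and sub: "\<Lambda> \<subseteq> lattice d"
    and A: "A > 0" and lower: "\<And>s. V s \<ge> A * s\<^sup>2 - B"
  shows "(\<integral>\<^sup>+\<phi>. boltzmann d V \<Lambda> \<psi> \<xi> \<phi> \<partial>field_measure \<Lambda>) < \<infinity>"
proof -
  interpret product_sigma_finite "\<lambda>_::site. lborel::real measure" by standard
  obtain \<epsilon> K where \<epsilon>: "\<epsilon> > 0" and coercive: "\<And>\<phi>. Ham d V \<Lambda> \<psi> \<xi> \<phi> \<ge> \<epsilon> * (\<Sum>x\<in>\<Lambda>. (\<phi> x)\<^sup>2) - K"
    using Ham_coercive[OF d fin sub A lower] by blast
  define g where "g = (\<lambda>t::real. ennreal (exp (- \<epsilon> * t\<^sup>2)))"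
  have g [measurable]: "g \<in> borel_measurable lborel" unfolding g_def by measurable
  have "boltzmann d V \<Lambda> \<psi> \<xi> \<phi> \<le> ennreal (exp K) * (\<Prod>x\<in>\<Lambda>. g (\<phi> x))" for \<phi>
  proof -
    have "exp (- Ham d V \<Lambda> \<psi> \<xi> \<phi>) \<le> exp (K + (\<Sum>x\<in>\<Lambda>. - \<epsilon> * (\<phi> x)\<^sup>2))"
      using coercive[of \<phi>] by (simp add: sum_distrib_left sum_negf)
    also have "\<dots> = exp K * (\<Prod>x\<in>\<Lambda>. exp (- \<epsilon> * (\<phi> x)\<^sup>2))"
      by (simp add: exp_add exp_sum[OF fin])
    finally have "boltzmann d V \<Lambda> \<psi> \<xi> \<phi> \<le> ennreal (exp K * (\<Prod>x\<in>\<Lambda>. exp (- \<epsilon> * (\<phi> x)\<^sup>2)))"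
      unfolding boltzmann_def by (rule ennreal_leI)
    then show ?thesis by (simp add: g_def ennreal_mult prod_nonneg prod_ennreal)
  qed
  then have "(\<integral>\<^sup>+\<phi>. boltzmann d V \<Lambda> \<psi> \<xi> \<phi> \<partial>field_measure \<Lambda>)
      \<le> (\<integral>\<^sup>+\<phi>. ennreal (exp K) * (\<Prod>x\<in>\<Lambda>. g (\<phi> x)) \<partial>field_measure \<Lambda>)"
    by (intro nn_integral_mono)
  also have "\<dots> = ennreal (exp K) * (\<Prod>x\<in>\<Lambda>. integral\<^sup>N lborel g)"
    using product_nn_integral_prod[OF fin, of "\<lambda>_. g"] g
    by (subst nn_integral_cmult) measurable
  also have "\<dots> < \<infinity>"
  proof -
    have "integral\<^sup>N lborel g < \<infinity>" using nn_integral_gaussian_finite[OF \<epsilon>] by (simp add: g_def)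
    then show ?thesis by (simp add: ennreal_mult_less_top power_less_top_ennreal)
  qed
  finally show ?thesis .
qed

lemma
  fixes V :: "real \<Rightarrow> real"
  assumes d: "d \<ge> 1" and fin: "finite \<Lambda>" and sub: "\<Lambda> \<subseteq> lattice d"
    and A: "A > 0" and lower: "\<And>s. V s \<ge> A * s\<^sup>2 - B" and V: "continuous_on UNIV V"
  shows nn_integral_boltzmann_eq_Zpart:
      "(\<integral>\<^sup>+\<phi>. boltzmann d V \<Lambda> \<psi> \<xi> \<phi> \<partial>field_measure \<Lambda>) = ennreal (Zpart d V \<Lambda> \<psi> \<xi>)"
    and Zpart_pos: "Zpart d V \<Lambda> \<psi> \<xi> > 0"
proof -
  let ?N = "\<integral>\<^sup>+\<phi>. boltzmann d V \<Lambda> \<psi> \<xi> \<phi> \<partial>field_measure \<Lambda>"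
  have "(\<lambda>\<phi>. exp (- Ham d V \<Lambda> \<psi> \<xi> \<phi>)) \<in> borel_measurable (field_measure \<Lambda>)"
    using borel_measurable_Ham[OF fin order_refl V] by measurable
  then have Z: "Zpart d V \<Lambda> \<psi> \<xi> = enn2real ?N"
    unfolding Zpart_def boltzmann_def by (rule integral_eq_nn_integral) simp
  have "?N < \<infinity>" by (rule nn_integral_boltzmann_finite[OF d fin sub A lower])
  moreover have "?N > 0"
    by (rule nn_integral_field_measure_pos[OF fin borel_measurable_boltzmann[OF fin order_refl V]])
       (simp add: boltzmann_def)
  ultimately show "?N = ennreal (Zpart d V \<Lambda> \<psi> \<xi>)" and "Zpart d V \<Lambda> \<psi> \<xi> > 0"
    unfolding Z by (auto simp: less_top enn2real_positive_iff)
qed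

section \<open>Splitting the partition function at the slice\<close>

definition near_box :: "site set \<Rightarrow> (site \<Rightarrow> real) \<Rightarrow> (site \<Rightarrow> real) set" where
  "near_box S \<psi> = PiE S (\<lambda>x. {\<psi> x - 1..\<psi> x + 1})"

lemma sets_near_box: "finite S \<Longrightarrow> near_box S \<psi> \<in> sets (field_measure S)"
  unfolding near_box_def by (rule sets_PiM_I_finite) auto

lemma emeasure_near_box:
  assumes "finite S"
  shows "emeasure (field_measure S) (near_box S \<psi>) = 2 ^ card S"
proof -
  interpret product_sigma_finite "\<lambda>_::site. lborel::real measure" by standard
  show ?thesis unfolding near_box_def using assms by (subst emeasure_PiM) auto
qed

lemma restrict_reflect_on_in_near_box:
  "S \<subseteq> L \<Longrightarrow> restrict (restrict (reflect_on S \<psi> \<phi>) L) S \<in> near_box S \<psi> \<longleftrightarrow> restrict \<phi> S \<in> near_box S \<psi>"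
  by (auto simp: near_box_def reflect_on_def PiE_iff)

lemma (in slab_reflection) boltzmann_reflect_ge:
  "ennreal (2 * exp ((\<Sum>x\<in>S. \<xi> x * \<psi> x) - slice_interaction d V C2 S \<psi>))
       * (boltzmann d V L1 \<psi> \<xi> \<phi> * boltzmann d V L2 \<psi> \<xi> \<phi>)
   \<le> boltzmann d V (L1 \<union> S \<union> L2) \<psi> \<xi> \<phi> + boltzmann d V (L1 \<union> S \<union> L2) \<psi> \<xi> (reflect_on S \<psi> \<phi>)"
  using ennreal_leI[OF exp_Ham_reflect_ge[of \<xi>]]
  by (simp add: boltzmann_def ennreal_mult mult.assoc)

context slab_decomposition
begin

lemma nn_integral_near_box_factor:
  assumes V: "continuous_on UNIV V"
  shows "(\<integral>\<^sup>+\<phi>. indicator (near_box S \<psi>) (restrict \<phi> S) * boltzmann d V L1 \<psi> \<xi> \<phi> * boltzmann d V L2 \<psi> \<xi> \<phi>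
            \<partial>field_measure (L1 \<union> S \<union> L2))
       = 2 ^ card S * (\<integral>\<^sup>+\<phi>. boltzmann d V L1 \<psi> \<xi> \<phi> \<partial>field_measure L1)
           * (\<integral>\<^sup>+\<phi>. boltzmann d V L2 \<psi> \<xi> \<phi> \<partial>field_measure L2)"
proof -
  define f where "f \<phi> = indicator (near_box S \<psi>) (restrict \<phi> S) * boltzmann d V L2 \<psi> \<xi> (restrict \<phi> L2)"
    for \<phi> :: "site \<Rightarrow> real"
  have "indicator (near_box S \<psi>) (restrict \<phi> S) * boltzmann d V L1 \<psi> \<xi> \<phi> * boltzmann d V L2 \<psi> \<xi> \<phi>
      = boltzmann d V L1 \<psi> \<xi> (restrict \<phi> L1) * f (restrict \<phi> (S \<union> L2))" for \<phi>
    by (simp add: f_def boltzmann_restrict mult_ac Int_absorb2)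
  moreover have "L1 \<union> S \<union> L2 = L1 \<union> (S \<union> L2)" by auto
  moreover have "f \<in> borel_measurable (field_measure (S \<union> L2))"
    unfolding f_def using finite sets_near_box[of S \<psi>]
    by (intro borel_measurable_times_ennreal borel_measurable_indicator'
        measurable_compose[OF measurable_restrict_subset borel_measurable_boltzmann[OF _ order_refl V]])
       (auto intro!: measurable_restrict_subset)
  ultimately have "(\<integral>\<^sup>+\<phi>. indicator (near_box S \<psi>) (restrict \<phi> S) * boltzmann d V L1 \<psi> \<xi> \<phi> * boltzmann d V L2 \<psi> \<xi> \<phi>
            \<partial>field_measure (L1 \<union> S \<union> L2))
      = (\<integral>\<^sup>+\<phi>. boltzmann d V L1 \<psi> \<xi> \<phi> \<partial>field_measure L1) * (\<integral>\<^sup>+\<phi>. f \<phi> \<partial>field_measure (S \<union> L2))"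
    using finite disjoint
    by (simp add: nn_integral_field_measure_split borel_measurable_boltzmann[OF _ order_refl V]
        Int_Un_distrib)
  also have "(\<integral>\<^sup>+\<phi>. f \<phi> \<partial>field_measure (S \<union> L2))
      = emeasure (field_measure S) (near_box S \<psi>) * (\<integral>\<^sup>+\<phi>. boltzmann d V L2 \<psi> \<xi> \<phi> \<partial>field_measure L2)"
    unfolding f_def using finite disjoint sets_near_box[of S \<psi>]
    by (subst nn_integral_field_measure_split) (auto simp: borel_measurable_boltzmann[OF _ order_refl V])
  also have "emeasure (field_measure S) (near_box S \<psi>) = 2 ^ card S"
    by (rule emeasure_near_box[OF finite(2)])
  finally show ?thesis by (simp only: mult_ac)
qed

lemma nn_integral_near_box_le:
  assumes V: "continuous_on UNIV V"
  shows "ennreal (2 * exp ((\<Sum>x\<in>S. \<xi> x * \<psi> x) - slice_interaction d V C2 S \<psi>))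
         * (\<integral>\<^sup>+\<phi>. indicator (near_box S \<psi>) (restrict \<phi> S) * boltzmann d V L1 \<psi> \<xi> \<phi> * boltzmann d V L2 \<psi> \<xi> \<phi>
             \<partial>field_measure (L1 \<union> S \<union> L2))
       \<le> 2 * (\<integral>\<^sup>+\<phi>. boltzmann d V (L1 \<union> S \<union> L2) \<psi> \<xi> \<phi> \<partial>field_measure (L1 \<union> S \<union> L2))"
proof -
  define L where "L = L1 \<union> S \<union> L2"
  have L: "finite L" "S \<subseteq> L" "L1 \<subseteq> L" "L2 \<subseteq> L" using finite by (auto simp: L_def)
  define c where "c = ennreal (2 * exp ((\<Sum>x\<in>S. \<xi> x * \<psi> x) - slice_interaction d V C2 S \<psi>))"
  define ind where "ind \<phi> = (indicator (near_box S \<psi>) (restrict \<phi> S) :: ennreal)" for \<phi> :: "site \<Rightarrow> real"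
  define R where "R \<phi> = restrict (reflect_on S \<psi> \<phi>) L" for \<phi>
  define w where "w = boltzmann d V L \<psi> \<xi>"
  have [measurable]: "ind \<in> borel_measurable (field_measure L)"
    unfolding ind_def using sets_near_box[OF finite(2)] L(2)
    by (intro measurable_compose[OF measurable_restrict_subset borel_measurable_indicator])
  have [measurable]: "w \<in> borel_measurable (field_measure L)" "R \<in> field_measure L \<rightarrow>\<^sub>M field_measure L"
    "boltzmann d V L1 \<psi> \<xi> \<in> borel_measurable (field_measure L)"
    "boltzmann d V L2 \<psi> \<xi> \<in> borel_measurable (field_measure L)"
    unfolding w_def R_def using L V finite
    by (auto intro!: borel_measurable_boltzmann measurable_reflect_on)
  have ind_R: "ind (R \<phi>) = ind \<phi>" for \<phi>
    using restrict_reflect_on_in_near_box[OF L(2)] by (simp add: ind_def R_def indicator_def)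
  have pointwise: "c * (ind \<phi> * boltzmann d V L1 \<psi> \<xi> \<phi> * boltzmann d V L2 \<psi> \<xi> \<phi>)
      \<le> ind \<phi> * w \<phi> + ind \<phi> * w (R \<phi>)" for \<phi>
  proof (cases "restrict \<phi> S \<in> near_box S \<psi>")
    case True
    interpret slab_reflection d V C2 L1 S L2 \<psi> \<phi>
      by unfold_locales (use True in \<open>auto simp: near_box_def PiE_iff\<close>)
    show ?thesis
      using boltzmann_reflect_ge[of \<xi>] True
      by (simp add: c_def ind_def w_def R_def L_def boltzmann_restrict mult.assoc)
  qed (simp add: ind_def)
  have "c * (\<integral>\<^sup>+\<phi>. ind \<phi> * boltzmann d V L1 \<psi> \<xi> \<phi> * boltzmann d V L2 \<psi> \<xi> \<phi> \<partial>field_measure L)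
      = (\<integral>\<^sup>+\<phi>. c * (ind \<phi> * boltzmann d V L1 \<psi> \<xi> \<phi> * boltzmann d V L2 \<psi> \<xi> \<phi>) \<partial>field_measure L)"
    by (rule nn_integral_cmult[symmetric]) measurable
  also have "\<dots> \<le> (\<integral>\<^sup>+\<phi>. ind \<phi> * w \<phi> + ind (R \<phi>) * w (R \<phi>) \<partial>field_measure L)"
    unfolding ind_R by (intro nn_integral_mono pointwise)
  also have "\<dots> = (\<integral>\<^sup>+\<phi>. ind \<phi> * w \<phi> \<partial>field_measure L) + (\<integral>\<^sup>+\<phi>. ind (R \<phi>) * w (R \<phi>) \<partial>field_measure L)"
    by (rule nn_integral_add) measurable
  also have "(\<integral>\<^sup>+\<phi>. ind (R \<phi>) * w (R \<phi>) \<partial>field_measure L) = (\<integral>\<^sup>+\<phi>. ind \<phi> * w \<phi> \<partial>field_measure L)"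
    unfolding R_def by (rule nn_integral_reflect_on[OF L(1)]) measurable
  finally have "c * (\<integral>\<^sup>+\<phi>. ind \<phi> * boltzmann d V L1 \<psi> \<xi> \<phi> * boltzmann d V L2 \<psi> \<xi> \<phi> \<partial>field_measure L)
      \<le> 2 * (\<integral>\<^sup>+\<phi>. ind \<phi> * w \<phi> \<partial>field_measure L)"
    by (simp add: mult_2)
  also have "(\<integral>\<^sup>+\<phi>. ind \<phi> * w \<phi> \<partial>field_measure L) \<le> (\<integral>\<^sup>+\<phi>. w \<phi> \<partial>field_measure L)"
    by (intro nn_integral_mono) (simp add: ind_def indicator_def)
  finally show ?thesis
    unfolding c_def ind_def w_def L_def by (simp add: mult_left_mono)
qed

lemma Zpart_ge_split:
  fixes A B :: real
  assumes d: "d \<ge> 1" and A: "A > 0" and lower: "\<And>s. V s \<ge> A * s\<^sup>2 - B"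
    and V: "continuous_on UNIV V"
  shows "exp ((\<Sum>x\<in>S. \<xi> x * \<psi> x) - slice_interaction d V C2 S \<psi>) * Zpart d V L1 \<psi> \<xi> * Zpart d V L2 \<psi> \<xi>
       \<le> Zpart d V (L1 \<union> S \<union> L2) \<psi> \<xi>"
proof -
  define e where "e = exp ((\<Sum>x\<in>S. \<xi> x * \<psi> x) - slice_interaction d V C2 S \<psi>)"
  have L: "finite (L1 \<union> S \<union> L2)" "L1 \<union> S \<union> L2 \<subseteq> lattice d" using finite sublattice by auto
  note Z = nn_integral_boltzmann_eq_Zpart[OF d _ _ A lower V] Zpart_pos[OF d _ _ A lower V]
  have Z1: "Zpart d V L1 \<psi> \<xi> > 0" and Z2: "Zpart d V L2 \<psi> \<xi> > 0"
    using Z(2)[OF finite(1) sublattice(1)] Z(2)[OF finite(3) sublattice(3)] by auto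
  have "ennreal (2 * e * (2 ^ card S * Zpart d V L1 \<psi> \<xi> * Zpart d V L2 \<psi> \<xi>))
      = ennreal (2 * e) * (2 ^ card S * ennreal (Zpart d V L1 \<psi> \<xi>) * ennreal (Zpart d V L2 \<psi> \<xi>))"
    using Z1 Z2 by (simp add: ennreal_mult' ennreal_mult'' ennreal_power[symmetric] e_def)
  also have "\<dots> \<le> 2 * ennreal (Zpart d V (L1 \<union> S \<union> L2) \<psi> \<xi>)"
    using nn_integral_near_box_le[OF V, where \<psi>=\<psi> and \<xi>=\<xi>]
      nn_integral_near_box_factor[OF V, where \<psi>=\<psi> and \<xi>=\<xi>]
    unfolding e_def Z(1)[OF L] Z(1)[OF finite(1) sublattice(1)] Z(1)[OF finite(3) sublattice(3)] by simp
  also have "\<dots> = ennreal (2 * Zpart d V (L1 \<union> S \<union> L2) \<psi> \<xi>)"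
    by (simp add: ennreal_mult')
  finally have "2 * e * (2 ^ card S * Zpart d V L1 \<psi> \<xi> * Zpart d V L2 \<psi> \<xi>) \<le> 2 * Zpart d V (L1 \<union> S \<union> L2) \<psi> \<xi>"
    by (subst (asm) ennreal_le_iff) (use Z(2)[OF L, of \<psi> \<xi>] in auto)
  moreover have "e * Zpart d V L1 \<psi> \<xi> * Zpart d V L2 \<psi> \<xi> \<le> e * (2 ^ card S * Zpart d V L1 \<psi> \<xi> * Zpart d V L2 \<psi> \<xi>)"
    using Z1 Z2 by (simp add: e_def)
  ultimately show ?thesis unfolding e_def[symmetric] by linarith
qed

end

lemma (in slab_decomposition) neg_ln_Zpart_le_split:
  fixes A B :: real
  assumes d: "d \<ge> 1" and A: "A > 0" and lower: "\<And>s. V s \<ge> A * s\<^sup>2 - B"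
    and V: "continuous_on UNIV V"
  shows "- ln (Zpart d V (L1 \<union> S \<union> L2) \<psi> \<xi>)
       \<le> - ln (Zpart d V L1 \<psi> \<xi>) - ln (Zpart d V L2 \<psi> \<xi>) + slice_interaction d V C2 S \<psi>
         - (\<Sum>x\<in>S. \<xi> x * \<psi> x)"
proof -
  have Z1: "Zpart d V L1 \<psi> \<xi> > 0" and Z2: "Zpart d V L2 \<psi> \<xi> > 0"
    and Z: "Zpart d V (L1 \<union> S \<union> L2) \<psi> \<xi> > 0"
    using Zpart_pos[OF d _ _ A lower V] finite sublattice by auto
  have "ln (exp ((\<Sum>x\<in>S. \<xi> x * \<psi> x) - slice_interaction d V C2 S \<psi>) * Zpart d V L1 \<psi> \<xi> * Zpart d V L2 \<psi> \<xi>)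
      \<le> ln (Zpart d V (L1 \<union> S \<union> L2) \<psi> \<xi>)"
    using Zpart_ge_split[OF d A lower V, where \<psi>=\<psi> and \<xi>=\<xi>] Z1 Z2 Z by simp
  then show ?thesis using Z1 Z2 by (simp add: ln_mult)
qed

lemma neg_ln_Zpart_box_split:
  fixes V :: "real \<Rightarrow> real" and A B C2 :: real and u :: "nat \<Rightarrow> real"
  assumes d: "d \<ge> 1" and V: "continuous_on UNIV V" and even: "\<And>s. V (- s) = V s"
    and semiconvex: "\<And>c s. V (c + s) + V (c - s) \<le> 2 * V c + 2 * C2 * s\<^sup>2" and C2: "C2 \<ge> 0"
    and A: "A > 0" and lower: "\<And>s. V s \<ge> A * s\<^sup>2 - B"
    and al: "\<forall>i\<in>{1..d}. a i < l i" and l1': "a 1 < l1'" "l1' < l 1"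
  defines "M \<equiv> \<Sum>i=1..d. \<bar>V (u i)\<bar>"
  shows "- ln (Zpart d V (box d a l) (psi d u) \<xi>)
       \<le> - ln (Zpart d V (box_strip d a l (a 1) (l1' - 1)) (psi d u) \<xi>)
         - ln (Zpart d V (box_strip d a l (l1' + 1) (l 1)) (psi d u) \<xi>)
         + (\<Prod>i=2..d. real_of_int (l i - a i + 1)) * (2 * real d * (M + 2 * C2) + M + (\<Sum>i=2..d. V (u i)))
         - (\<Sum>x\<in>box_slice d a l l1'. (u 1 * real_of_int l1' + (\<Sum>i=2..d. u i * real_of_int (x i))) * \<xi> x)"
proof -
  let ?S = "box_slice d a l l1'"
  define P where "P = (\<Prod>i=2..d. real_of_int (l i - a i + 1))"
  define Q where "Q = 2 * real d * (M + 2 * C2)"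
  interpret slab_decomposition d V C2 "box_strip d a l (a 1) (l1' - 1)" ?S "box_strip d a l (l1' + 1) (l 1)"
    by (rule slab_decomposition_box[OF d even semiconvex C2])
  have al2: "a i \<le> l i" if "i \<in> {2..d}" for i using al[rule_format, of i] that by simp
  have "Q \<ge> 0" using C2 by (simp add: Q_def M_def sum_nonneg)
  moreover have "real (card ?S) \<le> P" unfolding P_def using al2 by (intro card_box_slice_le[OF d]) auto
  ultimately have "slice_interaction d V C2 ?S (psi d u) \<le> P * Q"
    using slice_interaction_psi_le[where V=V, OF even sublattice(2) C2, of u] mult_right_mono
    unfolding Q_def M_def by fastforce
  moreover have "P * Q \<le> P * (Q + M + (\<Sum>i=2..d. V (u i)))"
  proof -
    have "(\<Sum>i=2..d. - \<bar>V (u i)\<bar>) \<le> (\<Sum>i=2..d. V (u i))" by (rule sum_mono) simp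
    moreover have "(\<Sum>i=2..d. \<bar>V (u i)\<bar>) \<le> M" unfolding M_def by (rule sum_mono2) auto
    moreover have "P \<ge> 0" unfolding P_def using al2 by (intro prod_nonneg) simp
    ultimately show ?thesis by (intro mult_left_mono) (auto simp: sum_negf)
  qed
  moreover have "(\<Sum>x\<in>?S. (u 1 * real_of_int l1' + (\<Sum>i=2..d. u i * real_of_int (x i))) * \<xi> x)
      = (\<Sum>x\<in>?S. \<xi> x * psi d u x)"
    using psi_on_box_slice[OF d] by (intro sum.cong) auto
  ultimately show ?thesis
    using neg_ln_Zpart_le_split[OF d A lower V, of "psi d u" \<xi>] l1'
      box_eq_strips_union_slice[OF d, of a l1' l] unfolding P_def Q_def
    by (simp add: algebra_simps)
qed

theorem lemma3p2:
  fixes d :: nat and V :: "real \<Rightarrow> real" and A B C2 :: real and u :: "nat \<Rightarrow> real"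
  assumes d: "d \<ge> 1"
    and V_diff: "\<And>s. V differentiable (at s)"
    and V'_diff: "\<And>s. deriv V differentiable (at s)"
    and V''_cont: "continuous_on UNIV (deriv (deriv V))"
    and V_even: "\<And>s. V (- s) = V s"
    and A: "A > 0" and V_lower: "\<And>s. V s \<ge> A * s\<^sup>2 - B"
    and C2: "C2 > 0" and V_upper: "\<And>s. deriv (deriv V) s \<le> C2"
  shows "\<exists>C>0. \<forall>(\<xi>::site \<Rightarrow> real) (a::site) (l::site) (l1'::int).
           a \<in> lattice d \<longrightarrow> l \<in> lattice d \<longrightarrow> (\<forall>i\<in>{1..d}. a i < l i) \<longrightarrow>
           a 1 < l1' \<longrightarrow> l1' < l 1 \<longrightarrow>
           - ln (Zpart d V (box d a l) (psi d u) \<xi>)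
           \<le> - ln (Zpart d V (box_strip d a l (a 1) (l1' - 1)) (psi d u) \<xi>)
             - ln (Zpart d V (box_strip d a l (l1' + 1) (l 1)) (psi d u) \<xi>)
             - (\<Prod>i=2..d. real_of_int (l i - a i + 1)) * (ln C - (\<Sum>i=2..d. V (u i)))
             - (\<Sum>x\<in>box_slice d a l l1'.
                  (u 1 * real_of_int l1' + (\<Sum>i=2..d. u i * real_of_int (x i))) * \<xi> x)"
proof -
  have V: "continuous_on UNIV V"
    using V_diff by (intro continuous_at_imp_continuous_on) (auto intro: differentiable_imp_continuous_within)
  have semiconvex: "V (c + s) + V (c - s) \<le> 2 * V c + 2 * C2 * s\<^sup>2" for c s
    using semiconvex_of_deriv2_le[OF V_diff V'_diff V_upper] C2 by simp
  define M where "M = (\<Sum>i=1..d. \<bar>V (u i)\<bar>)"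
  (* Each site of the slice has at most 2 d bonds, each costing at most M + 2 C2. *)
  show ?thesis
    using neg_ln_Zpart_box_split[OF d V V_even semiconvex _ A V_lower] C2
    by (intro exI[of _ "exp (- (2 * real d * (M + 2 * C2) + M))"] conjI allI impI)
       (simp_all add: M_def algebra_simps)
qed

end
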